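(* Let $e\geq 2$, $N$ cyclic of order $2^e$, and let $G$ be a non-regular transitive subgroup of $\mathrm{Hol}(N)$. Then $|Z(G)|\cdot|[G,G]|=2^e$.
   Context: $\mathrm{Hol}(N)=N\rtimes\mathrm{Aut}(N)$ acts on $N$ by $(\eta,\alpha)\cdot x=\eta\,\alpha(x)$; a subgroup is transitive if it acts transitively on $N$, and regular if moreover the stabiliser of $1_N$ is trivial. $Z(G)$ is the centre and $[G,G]$ the commutator subgroup of $G$. *)

theory Defs
  imports "HOL-Algebra.Algebra"
begin

text \<open>Automorphisms of N, represented as extensional functions on the carrier,
  so that they are determined by their values on the carrier.\<close>
definition Aut_ext :: "('a, 'b) monoid_scheme \<Rightarrow> ('a \<Rightarrow> 'a) set" where
  "Aut_ext N = {\<alpha>. \<alpha> \<in> iso N N \<and> \<alpha> \<in> extensional (carrier N)}"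

definition holomorph :: "('a, 'b) monoid_scheme \<Rightarrow> ('a \<times> ('a \<Rightarrow> 'a)) monoid" where
  "holomorph N = \<lparr> carrier = carrier N \<times> Aut_ext N,
     monoid.mult = (\<lambda>(\<eta>, \<alpha>) (\<eta>', \<alpha>'). (\<eta> \<otimes>\<^bsub>N\<^esub> \<alpha> \<eta>', compose (carrier N) \<alpha> \<alpha>')),
     monoid.one = (\<one>\<^bsub>N\<^esub>, restrict id (carrier N)) \<rparr>"

definition hol_act :: "('a, 'b) monoid_scheme \<Rightarrow> 'a \<times> ('a \<Rightarrow> 'a) \<Rightarrow> 'a \<Rightarrow> 'a" where
  "hol_act N g x = fst g \<otimes>\<^bsub>N\<^esub> snd g x"

definition hol_transitive :: "('a, 'b) monoid_scheme \<Rightarrow> ('a \<times> ('a \<Rightarrow> 'a)) set \<Rightarrow> bool" where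
  "hol_transitive N G \<longleftrightarrow>
     (\<forall>x \<in> carrier N. \<forall>y \<in> carrier N. \<exists>g \<in> G. hol_act N g x = y)"

definition hol_regular :: "('a, 'b) monoid_scheme \<Rightarrow> ('a \<times> ('a \<Rightarrow> 'a)) set \<Rightarrow> bool" where
  "hol_regular N G \<longleftrightarrow> hol_transitive N G \<and>
     {g \<in> G. hol_act N g \<one>\<^bsub>N\<^esub> = \<one>\<^bsub>N\<^esub>} = {\<one>\<^bsub>holomorph N\<^esub>}"

definition group_center :: "('a, 'b) monoid_scheme \<Rightarrow> 'a set" where
  "group_center G = {z \<in> carrier G. \<forall>g \<in> carrier G. z \<otimes>\<^bsub>G\<^esub> g = g \<otimes>\<^bsub>G\<^esub> z}"

end

theory Submission
  imports Defs
begin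

(* Write N = Z/2^e through a generator g.  An element h of Hol(N) acts on exponents of g as the
   affine map k \<mapsto> a k + b with a = coef h odd and b = transl h, and transitivity of G means
   that b is onto on G.  Fix g1 in G with b(g1) = 1 and put \<kappa> = a(g1) - 1.  Then
   E(h) = 1 - a(h) + \<kappa> b(h) mod 2^e is a crossed homomorphism vanishing at g1, the commutator
   of x and y is the translation by b(x) E(y) - b(y) E(x), and h commutes with g1 iff E(h) = 0.
   Let 2^\<epsilon> be the largest power of 2 dividing all values of E on G; non-regularity gives
   \<epsilon> < e.  Then G' consists of the translations by multiples of 2^\<epsilon>, which are the
   powers of [g1, t] for E(t) of valuation \<epsilon>, so |G'| = 2^(e-\<epsilon>); and Z(G) consists of the
   h with E(h) = 0 and 2^(e-\<epsilon>) | b(h).  To see that every such b occurs, count: |G| is at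
   least 2 2^e because the stabiliser of 1 is nontrivial, the fibres of E are cosets of its kernel
   and E takes at most 2^(e-\<epsilon>) values, so the kernel contains at least 2^\<epsilon> elements with
   even b.  These are determined by b, so one of them has b of valuation at most e - \<epsilon>; since
   its a is 1 mod 4, the translation parts of its powers run through all multiples of that power
   of 2.  Hence |Z(G)| = 2^\<epsilon>. *)

lemma sum_powers_lessThan_add:
  "(\<Sum>i<k + m. (\<mu>::int) ^ i) = (\<Sum>i<k. \<mu> ^ i) + \<mu> ^ k * (\<Sum>i<m. \<mu> ^ i)"
  by (induction m) (auto simp: power_add algebra_simps)

lemma even_sum_powers_iff:
  assumes "odd (\<mu>::int)"
  shows "even (\<Sum>i<k. \<mu> ^ i) \<longleftrightarrow> even k"
  by (induction k) (use assms in auto)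

lemma pow2_dvd_sum_powers_iff:
  fixes \<mu> :: int
  assumes \<mu>: "\<mu> mod 4 = 1"
  shows "2 ^ j dvd (\<Sum>i<k. \<mu> ^ i) \<longleftrightarrow> 2 ^ j dvd int k"
proof (induction k arbitrary: j rule: less_induct)
  case (less k)
  show ?case
  proof (cases j)
    case 0
    then show ?thesis by simp
  next
    case (Suc j')
    have "odd \<mu>" using \<mu> by presburger
    show ?thesis
    proof (cases "even k")
      case False
      then have "odd (\<Sum>i<k. \<mu> ^ i)" using even_sum_powers_iff[OF \<open>odd \<mu>\<close>] by simp
      with False show ?thesis using Suc by (auto dest: dvd_trans[of 2, rotated])
    next
      case True
      then obtain m where k: "k = m + m" by (metis dvdE mult_2)
      have "\<mu> ^ m mod 4 = 1" using power_mod[of \<mu> 4 m] \<mu> by simp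
      then have "(1 + \<mu> ^ m) mod 4 = 2" by (simp add: mod_add_right_eq[symmetric])
      moreover have "\<And>x::int. x mod 4 = 2 \<Longrightarrow> \<exists>w. x = 2 * w \<and> odd w" by presburger
      ultimately obtain w where w: "1 + \<mu> ^ m = 2 * w" "odd w" by blast
      have "(\<Sum>i<k. \<mu> ^ i) = (1 + \<mu> ^ m) * (\<Sum>i<m. \<mu> ^ i)"
        unfolding k sum_powers_lessThan_add by (simp add: algebra_simps)
      also have "\<dots> = 2 * (w * (\<Sum>i<m. \<mu> ^ i))"
        using w(1) by simp
      finally have "(\<Sum>i<k. \<mu> ^ i) = 2 * (w * (\<Sum>i<m. \<mu> ^ i))" .
      then have "2 ^ j dvd (\<Sum>i<k. \<mu> ^ i) \<longleftrightarrow> 2 ^ j' dvd (\<Sum>i<m. \<mu> ^ i)"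
        using Suc w(2) by (simp add: coprime_dvd_mult_right_iff)
      also have "\<dots> \<longleftrightarrow> 2 ^ j' dvd int m"
        by (cases "m = 0") (use k less.IH in auto)
      also have "\<dots> \<longleftrightarrow> 2 ^ j dvd int k"
        using Suc k by (simp flip: mult_2)
      finally show ?thesis .
    qed
  qed
qed

lemma card_pow2_multiples:
  assumes "j \<le> e"
  shows "card {x::int. 0 \<le> x \<and> x < 2 ^ e \<and> 2 ^ j dvd x} = 2 ^ (e - j)"
proof -
  have e: "(2::int) ^ e = 2 ^ j * 2 ^ (e - j)"
    using assms by (simp flip: power_add)
  have "{x::int. 0 \<le> x \<and> x < 2 ^ e \<and> 2 ^ j dvd x} = (\<lambda>k. 2 ^ j * k) ` {0..<2 ^ (e - j)}"
    unfolding e by (auto simp: zero_le_mult_iff)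
  moreover have "inj_on (\<lambda>k::int. 2 ^ j * k) {0..<2 ^ (e - j)}"
    by (auto simp: inj_on_def)
  ultimately show ?thesis
    by (simp add: card_image nat_power_eq)
qed

lemma (in group) card_eq_card_kernel_mult_card_image:
  assumes S: "subgroup S G" "finite S" and K: "K \<subseteq> S"
    and fibres: "\<And>x y. x \<in> S \<Longrightarrow> y \<in> S \<Longrightarrow> f x = f y \<longleftrightarrow> inv x \<otimes> y \<in> K"
  shows "card S = card K * card (f ` S)"
proof -
  have S_carrier: "S \<subseteq> carrier G" using subgroup.subset[OF S(1)] .
  have fibre: "{y \<in> S. f y = f x} = (\<otimes>) x ` K" if x: "x \<in> S" for x
  proof (rule Set.set_eqI, rule iffI)
    fix y assume y: "y \<in> {y \<in> S. f y = f x}"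
    then have "inv x \<otimes> y \<in> K" using fibres[OF x, of y] by auto
    moreover have "y = x \<otimes> (inv x \<otimes> y)" using S_carrier x y by (auto simp flip: m_assoc simp: subsetD)
    ultimately show "y \<in> (\<otimes>) x ` K" by blast
  next
    fix y assume "y \<in> (\<otimes>) x ` K"
    then obtain k where k: "k \<in> K" "y = x \<otimes> k" by blast
    have "x \<in> carrier G" "k \<in> carrier G" using K S_carrier x k(1) by auto
    then have "inv x \<otimes> y = k" using k(2) by (simp flip: m_assoc)
    moreover have "y \<in> S" using k K x subgroup.m_closed[OF S(1)] by auto
    ultimately show "y \<in> {y \<in> S. f y = f x}" using fibres[OF x, of y] k(1) by auto
  qed
  have card_fibre: "card {y \<in> S. f y = v} = card K" if "v \<in> f ` S" for v
  proof -
    obtain x where x: "x \<in> S" "v = f x" using \<open>v \<in> f ` S\<close> by blast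
    have "inj_on ((\<otimes>) x) K"
      using K S_carrier x by (intro inj_onI) (auto simp: subset_iff)
    then show ?thesis using fibre[OF x(1)] x(2) by (simp add: card_image)
  qed
  have "card S = card (\<Union>v \<in> f ` S. {y \<in> S. f y = v})"
    by (rule arg_cong[where f = card]) blast
  also have "\<dots> = (\<Sum>v \<in> f ` S. card {y \<in> S. f y = v})"
    by (rule card_UN_disjoint) (use S(2) in auto)
  also have "\<dots> = card K * card (f ` S)"
    using card_fibre by simp
  finally show ?thesis .
qed

lemma (in group) commutator_eq_one_iff:
  "x \<in> carrier G \<Longrightarrow> y \<in> carrier G \<Longrightarrow> x \<otimes> y \<otimes> inv x \<otimes> inv y = \<one> \<longleftrightarrow> x \<otimes> y = y \<otimes> x"
  by (simp add: inv_solve_right')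

context group
begin

lemma Aut_ext_closed: "\<alpha> \<in> Aut_ext G \<Longrightarrow> x \<in> carrier G \<Longrightarrow> \<alpha> x \<in> carrier G"
  unfolding Aut_ext_def iso_def hom_def by auto

lemma Aut_ext_funcset: "\<alpha> \<in> Aut_ext G \<Longrightarrow> \<alpha> \<in> carrier G \<rightarrow> carrier G"
  by (auto simp: Aut_ext_closed)

lemma Aut_ext_hom: "\<alpha> \<in> Aut_ext G \<Longrightarrow> \<alpha> \<in> hom G G"
  unfolding Aut_ext_def iso_def by auto

lemma Aut_ext_mult:
  "\<alpha> \<in> Aut_ext G \<Longrightarrow> x \<in> carrier G \<Longrightarrow> y \<in> carrier G \<Longrightarrow> \<alpha> (x \<otimes> y) = \<alpha> x \<otimes> \<alpha> y"
  using Aut_ext_hom by (auto simp: hom_def)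

lemma Aut_ext_one: "\<alpha> \<in> Aut_ext G \<Longrightarrow> \<alpha> \<one> = \<one>"
  by (intro group_hom.hom_one group_hom.intro group_hom_axioms.intro Aut_ext_hom is_group)

lemma Aut_ext_compose:
  assumes "\<alpha> \<in> Aut_ext G" "\<beta> \<in> Aut_ext G"
  shows "compose (carrier G) \<alpha> \<beta> \<in> Aut_ext G"
proof -
  have "\<alpha> \<circ> \<beta> \<in> iso G G" using assms unfolding Aut_ext_def using iso_set_trans by blast
  then have "compose (carrier G) \<alpha> \<beta> \<in> iso G G" by (rule iso_eq) (simp add: compose_eq)
  then show ?thesis unfolding Aut_ext_def compose_def by auto
qed

lemma Aut_ext_id: "restrict id (carrier G) \<in> Aut_ext G"
proof -
  have "restrict id (carrier G) \<in> iso G G" by (rule iso_eq[OF id_iso]) simp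
  then show ?thesis unfolding Aut_ext_def by auto
qed

lemma Aut_ext_inv:
  assumes "\<alpha> \<in> Aut_ext G"
  defines "\<beta> \<equiv> restrict (inv_into (carrier G) \<alpha>) (carrier G)"
  shows "\<beta> \<in> Aut_ext G" and "compose (carrier G) \<beta> \<alpha> = restrict id (carrier G)"
proof -
  have iso: "\<alpha> \<in> iso G G" using assms unfolding Aut_ext_def by auto
  have "\<beta> \<in> iso G G" unfolding \<beta>_def by (rule iso_eq[OF iso_set_sym[OF iso]]) simp
  then show "\<beta> \<in> Aut_ext G" unfolding Aut_ext_def \<beta>_def by auto
  have "inj_on \<alpha> (carrier G)" using iso unfolding iso_def by (auto dest: bij_betw_imp_inj_on)
  then show "compose (carrier G) \<beta> \<alpha> = restrict id (carrier G)"
    unfolding compose_def \<beta>_def by (intro restrict_ext) (simp add: Aut_ext_closed[OF assms(1)])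
qed

lemma holomorph_is_group: "group (holomorph G)"
proof -
  have carrier: "carrier (holomorph G) = carrier G \<times> Aut_ext G"
    and mult: "\<And>a \<alpha> b \<beta>. (a, \<alpha>) \<otimes>\<^bsub>holomorph G\<^esub> (b, \<beta>) = (a \<otimes> \<alpha> b, compose (carrier G) \<alpha> \<beta>)"
    and one: "\<one>\<^bsub>holomorph G\<^esub> = (\<one>, restrict id (carrier G))"
    by (simp_all add: holomorph_def)
  show ?thesis
  proof (rule groupI)
    fix x y assume "x \<in> carrier (holomorph G)" "y \<in> carrier (holomorph G)"
    then show "x \<otimes>\<^bsub>holomorph G\<^esub> y \<in> carrier (holomorph G)"
      by (auto simp: carrier mult Aut_ext_closed Aut_ext_compose)
  next
    show "\<one>\<^bsub>holomorph G\<^esub> \<in> carrier (holomorph G)"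
      by (simp add: carrier one Aut_ext_id)
  next
    fix x y z
    assume "x \<in> carrier (holomorph G)" "y \<in> carrier (holomorph G)" "z \<in> carrier (holomorph G)"
    then show "x \<otimes>\<^bsub>holomorph G\<^esub> y \<otimes>\<^bsub>holomorph G\<^esub> z =
        x \<otimes>\<^bsub>holomorph G\<^esub> (y \<otimes>\<^bsub>holomorph G\<^esub> z)"
      by (auto simp: carrier mult compose_eq compose_assoc[OF Aut_ext_funcset] Aut_ext_mult
          Aut_ext_closed m_assoc)
  next
    fix x assume "x \<in> carrier (holomorph G)"
    then obtain a \<alpha> where x: "x = (a, \<alpha>)" and a: "a \<in> carrier G" and \<alpha>: "\<alpha> \<in> Aut_ext G"
      by (auto simp: carrier)
    have "compose (carrier G) (restrict id (carrier G)) \<alpha> = \<alpha>"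
      using \<alpha> by (intro extensionalityI[of _ "carrier G"])
        (auto simp: compose_def Aut_ext_closed Aut_ext_def)
    then show "\<one>\<^bsub>holomorph G\<^esub> \<otimes>\<^bsub>holomorph G\<^esub> x = x"
      using a by (simp add: x one mult)
    define \<beta> where "\<beta> = restrict (inv_into (carrier G) \<alpha>) (carrier G)"
    note \<beta> = Aut_ext_inv[OF \<alpha>, folded \<beta>_def]
    have "\<beta> (inv a) \<otimes> \<beta> a = \<one>"
      using a \<beta>(1) by (simp add: Aut_ext_one flip: Aut_ext_mult)
    then show "\<exists>y\<in>carrier (holomorph G). y \<otimes>\<^bsub>holomorph G\<^esub> x = \<one>\<^bsub>holomorph G\<^esub>"
      using a \<beta> by (intro bexI[of _ "(\<beta> (inv a), \<beta>)"]) (auto simp: x carrier mult one Aut_ext_closed)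
  qed
qed

end

section \<open>Coordinates on the holomorph of a cyclic group of order \<open>2 ^ e\<close>\<close>

locale cyclic_pow2_group = group N for N :: "('a, 'b) monoid_scheme" (structure) +
  fixes g :: 'a and e :: nat
  assumes generator_closed: "g \<in> carrier N"
    and carrier_eq_powers: "carrier N = range (\<lambda>k::int. g [^] k)"
    and ord_generator: "ord g = 2 ^ e"
    and exponent_pos: "0 < e"
begin

abbreviation n :: int where "n \<equiv> 2 ^ e"

abbreviation Hol where "Hol \<equiv> holomorph N"

sublocale hol: group Hol
  by (rule holomorph_is_group)

lemma n_gt_1: "1 < n"
  using exponent_pos by simp

lemma even_n: "even n"
  using exponent_pos by simp

lemma pow2_dvd_n: "j \<le> e \<Longrightarrow> (2::int) ^ j dvd n"
  by (rule le_imp_power_dvd)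

lemma dvd_n_mult_odd_iff:
  assumes "d dvd n" "odd c"
  shows "d dvd c * x \<longleftrightarrow> d dvd x"
proof -
  have "coprime d c"
    using coprime_divisors[OF assms(1) dvd_refl] assms(2) by simp
  then show ?thesis by (rule coprime_dvd_mult_right_iff)
qed

lemma dvd_n_iff_eq_0: "0 \<le> x \<Longrightarrow> x < n \<Longrightarrow> n dvd x \<longleftrightarrow> x = 0"
  using zdvd_not_zless[of x n] by fastforce

lemma dvd_n_diff_iff:
  assumes "0 \<le> a" "a < n" "0 \<le> b" "b < n"
  shows "n dvd b - a \<longleftrightarrow> a = b"
  using assms by (metis mod_eq_dvd_iff mod_pos_pos_trivial)

lemma pow_eq_iff: "g [^] (i::int) = g [^] (j::int) \<longleftrightarrow> i mod n = j mod n"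
  using int_pow_eq[OF generator_closed, of i j] ord_generator
  by (simp add: mod_eq_dvd_iff dvd_diff_commute)

definition dlog :: "'a \<Rightarrow> int" where
  "dlog x = (SOME k. 0 \<le> k \<and> k < n \<and> x = g [^] k)"

lemma dlog:
  assumes "x \<in> carrier N"
  shows "0 \<le> dlog x" "dlog x < n" "g [^] dlog x = x"
proof -
  obtain k :: int where "x = g [^] k" using assms carrier_eq_powers by auto
  then have "x = g [^] (k mod n)" using pow_eq_iff by simp
  then have "\<exists>k. 0 \<le> k \<and> k < n \<and> x = g [^] k" by (intro exI[of _ "k mod n"]) simp
  then show "0 \<le> dlog x" "dlog x < n" "g [^] dlog x = x"
    unfolding dlog_def by (metis (mono_tags, lifting) someI_ex)+
qed

lemma dlog_pow [simp]: "dlog (g [^] (k::int)) = k mod n"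
proof -
  have "g [^] dlog (g [^] k) = g [^] k" using dlog(3) generator_closed by simp
  then show ?thesis using dlog(1,2) generator_closed pow_eq_iff by simp
qed

lemma Aut_ext_pow:
  assumes "\<alpha> \<in> Aut_ext N"
  shows "\<alpha> (g [^] (k::int)) = g [^] (dlog (\<alpha> g) * k)"
proof -
  have "\<alpha> (g [^] k) = \<alpha> g [^] k"
    using hom_int_pow[OF Aut_ext_hom[OF assms] generator_closed] is_group by simp
  also have "\<dots> = (g [^] dlog (\<alpha> g)) [^] k"
    using dlog(3)[OF Aut_ext_closed[OF assms generator_closed]] by simp
  also have "\<dots> = g [^] (dlog (\<alpha> g) * k)"
    using generator_closed by (rule int_pow_pow)
  finally show ?thesis .
qed

lemma odd_dlog_Aut_ext:
  assumes \<alpha>: "\<alpha> \<in> Aut_ext N"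
  shows "odd (dlog (\<alpha> g))"
proof -
  have "g \<in> \<alpha> ` carrier N"
    using \<alpha> generator_closed unfolding Aut_ext_def iso_def bij_betw_def by auto
  then obtain x where "x \<in> carrier N" "\<alpha> x = g" by blast
  then have "g [^] (1::int) = g [^] (dlog (\<alpha> g) * dlog x)"
    using Aut_ext_pow[OF \<alpha>, of "dlog x"] dlog(3) generator_closed by simp
  then have "n dvd 1 - dlog (\<alpha> g) * dlog x"
    by (simp only: pow_eq_iff mod_eq_dvd_iff)
  then have "even (1 - dlog (\<alpha> g) * dlog x)"
    using even_n dvd_trans by blast
  then show ?thesis by simp
qed

(* An element h = (g [^] b, \<alpha>) with \<alpha> g = g [^] a acts on exponents of g as k \<mapsto> a k + b;
   transl h and coef h are b and a, reduced into [0, 2^e). *)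
definition transl :: "'a \<times> ('a \<Rightarrow> 'a) \<Rightarrow> int" where
  "transl h = dlog (fst h)"

definition coef :: "'a \<times> ('a \<Rightarrow> 'a) \<Rightarrow> int" where
  "coef h = dlog (snd h g)"

lemma hol_carrier: "carrier Hol = carrier N \<times> Aut_ext N"
  by (simp add: holomorph_def)

lemma hol_mult:
  "x \<otimes>\<^bsub>Hol\<^esub> y = (fst x \<otimes> snd x (fst y), compose (carrier N) (snd x) (snd y))"
  by (simp add: holomorph_def case_prod_beta)

lemma hol_one: "\<one>\<^bsub>Hol\<^esub> = (\<one>, restrict id (carrier N))"
  by (simp add: holomorph_def)

lemma transl_range: "h \<in> carrier Hol \<Longrightarrow> 0 \<le> transl h \<and> transl h < n"
  unfolding transl_def by (auto simp: hol_carrier dlog)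

lemma coef_range: "h \<in> carrier Hol \<Longrightarrow> 0 \<le> coef h \<and> coef h < n"
  unfolding coef_def by (auto simp: hol_carrier dlog Aut_ext_closed generator_closed)

lemma odd_coef: "h \<in> carrier Hol \<Longrightarrow> odd (coef h)"
  unfolding coef_def by (auto simp: hol_carrier odd_dlog_Aut_ext)

lemma fst_eq_pow: "h \<in> carrier Hol \<Longrightarrow> fst h = g [^] transl h"
  unfolding transl_def by (auto simp: hol_carrier dlog)

lemma snd_pow: "h \<in> carrier Hol \<Longrightarrow> snd h (g [^] (k::int)) = g [^] (coef h * k)"
  unfolding coef_def by (auto simp: hol_carrier Aut_ext_pow)

lemma hol_eqI:
  assumes x: "x \<in> carrier Hol" and y: "y \<in> carrier Hol"
    and "transl x = transl y" and "coef x = coef y"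
  shows "x = y"
proof -
  have "fst x = fst y" using assms fst_eq_pow by simp
  moreover have "snd x = snd y"
  proof (rule extensionalityI)
    show "snd x \<in> extensional (carrier N)" "snd y \<in> extensional (carrier N)"
      using x y by (auto simp: hol_carrier Aut_ext_def)
    fix z assume "z \<in> carrier N"
    then obtain k where "z = g [^] (k::int)" using carrier_eq_powers by auto
    then show "snd x z = snd y z" using assms snd_pow by simp
  qed
  ultimately show ?thesis by (simp add: prod_eq_iff)
qed

lemma transl_mult:
  assumes "x \<in> carrier Hol" "y \<in> carrier Hol"
  shows "transl (x \<otimes>\<^bsub>Hol\<^esub> y) = (transl x + coef x * transl y) mod n"
proof -
  have "fst (x \<otimes>\<^bsub>Hol\<^esub> y) = g [^] transl x \<otimes> g [^] (coef x * transl y)"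
    using assms by (simp add: hol_mult fst_eq_pow snd_pow)
  also have "\<dots> = g [^] (transl x + coef x * transl y)"
    using generator_closed by (simp add: int_pow_mult)
  finally show ?thesis unfolding transl_def by simp
qed

lemma coef_mult:
  assumes "x \<in> carrier Hol" "y \<in> carrier Hol"
  shows "coef (x \<otimes>\<^bsub>Hol\<^esub> y) = (coef x * coef y) mod n"
proof -
  have "snd (x \<otimes>\<^bsub>Hol\<^esub> y) g = snd x (g [^] coef y)"
    using assms snd_pow[of y 1] generator_closed by (simp add: hol_mult compose_eq)
  also have "\<dots> = g [^] (coef x * coef y)"
    using assms by (simp add: snd_pow)
  finally show ?thesis unfolding coef_def by simp
qed

lemma transl_one [simp]: "transl \<one>\<^bsub>Hol\<^esub> = 0"
  using dlog_pow[of 0] by (simp add: transl_def hol_one)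

lemma coef_one [simp]: "coef \<one>\<^bsub>Hol\<^esub> = 1"
  using dlog_pow[of 1] exponent_pos generator_closed by (simp add: coef_def hol_one)

lemma coef_pow:
  assumes "x \<in> carrier Hol"
  shows "coef (x [^]\<^bsub>Hol\<^esub> (k::nat)) = coef x ^ k mod n"
proof (induction k)
  case 0
  then show ?case using exponent_pos by simp
next
  case (Suc k)
  then show ?case
    using assms by (simp add: coef_mult mod_mult_left_eq mod_mult_right_eq mult.commute)
qed

lemma transl_pow:
  assumes "x \<in> carrier Hol"
  shows "transl (x [^]\<^bsub>Hol\<^esub> (k::nat)) = transl x * (\<Sum>i<k. coef x ^ i) mod n"
proof (induction k)
  case 0
  then show ?case by simp
next
  case (Suc k)
  have "transl (x [^]\<^bsub>Hol\<^esub> Suc k)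
      = (transl x * (\<Sum>i<k. coef x ^ i) mod n + coef x ^ k mod n * transl x) mod n"
    using assms by (simp add: transl_mult coef_pow Suc.IH)
  also have "\<dots> = (transl x * (\<Sum>i<k. coef x ^ i) + coef x ^ k * transl x) mod n"
    by (intro mod_add_cong mod_mult_cong) simp_all
  also have "\<dots> = transl x * (\<Sum>i<Suc k. coef x ^ i) mod n"
    by (simp add: algebra_simps)
  finally show ?case .
qed

lemma finite_carrier_hol: "finite (carrier Hol)"
proof (rule inj_on_finite)
  show "inj_on (\<lambda>h. (transl h, coef h)) (carrier Hol)"
    by (intro inj_onI hol_eqI) auto
  show "(\<lambda>h. (transl h, coef h)) ` carrier Hol \<subseteq> {0..<n} \<times> {0..<n}"
    using transl_range coef_range by auto
qed simp

lemma hol_act_one: "h \<in> carrier Hol \<Longrightarrow> hol_act N h \<one> = g [^] transl h"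
  using snd_pow[of h 0] fst_eq_pow[of h] generator_closed
  by (simp add: hol_act_def hol_carrier)

subsection \<open>Crossed homomorphisms\<close>

definition crossed_hom :: "('a \<times> ('a \<Rightarrow> 'a) \<Rightarrow> int) \<Rightarrow> bool" where
  "crossed_hom F \<longleftrightarrow>
     (\<forall>x \<in> carrier Hol. 0 \<le> F x \<and> F x < n) \<and>
     (\<forall>x \<in> carrier Hol. \<forall>y \<in> carrier Hol. F (x \<otimes>\<^bsub>Hol\<^esub> y) = (F x + coef x * F y) mod n)"

lemma crossed_hom_transl: "crossed_hom transl"
  unfolding crossed_hom_def using transl_range transl_mult by blast

(* The combination of the crossed homomorphism transl with the principal one h \<mapsto> 1 - coef h. *)
definition cocycle :: "int \<Rightarrow> 'a \<times> ('a \<Rightarrow> 'a) \<Rightarrow> int" where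
  "cocycle \<kappa> h = (1 - coef h + \<kappa> * transl h) mod n"

lemma crossed_hom_cocycle: "crossed_hom (cocycle \<kappa>)"
proof -
  have "cocycle \<kappa> (x \<otimes>\<^bsub>Hol\<^esub> y) = (cocycle \<kappa> x + coef x * cocycle \<kappa> y) mod n"
    if "x \<in> carrier Hol" "y \<in> carrier Hol" for x y
  proof -
    have "cocycle \<kappa> (x \<otimes>\<^bsub>Hol\<^esub> y)
        = (1 - coef x * coef y + \<kappa> * (transl x + coef x * transl y)) mod n"
      unfolding cocycle_def coef_mult[OF that] transl_mult[OF that]
      by (intro mod_add_cong mod_diff_cong mod_mult_cong) simp_all
    also have "\<dots> = ((1 - coef x + \<kappa> * transl x) + coef x * (1 - coef y + \<kappa> * transl y)) mod n"
      by (simp add: algebra_simps)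
    also have "\<dots> = (cocycle \<kappa> x + coef x * cocycle \<kappa> y) mod n"
      unfolding cocycle_def by (intro mod_add_cong mod_mult_cong) simp_all
    finally show ?thesis .
  qed
  then show ?thesis unfolding crossed_hom_def cocycle_def by simp
qed

lemma crossed_hom_dvd_diff_iff:
  assumes F: "crossed_hom F" and d: "d dvd n" and x: "x \<in> carrier Hol" and y: "y \<in> carrier Hol"
  shows "d dvd F y - F x \<longleftrightarrow> d dvd F (inv\<^bsub>Hol\<^esub> x \<otimes>\<^bsub>Hol\<^esub> y)"
proof -
  define z where "z = inv\<^bsub>Hol\<^esub> x \<otimes>\<^bsub>Hol\<^esub> y"
  have z: "z \<in> carrier Hol" and "y = x \<otimes>\<^bsub>Hol\<^esub> z"
    using x y by (simp_all add: z_def flip: hol.m_assoc)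
  then have "F y = (F x + coef x * F z) mod n"
    using F x unfolding crossed_hom_def by blast
  then have "d dvd (F x + coef x * F z) - F y"
    using d dvd_minus_mod dvd_trans by metis
  then have "d dvd F y - F x \<longleftrightarrow> d dvd coef x * F z"
    using dvd_add_left_iff[of d "(F x + coef x * F z) - F y" "F y - F x"] by simp
  also have "\<dots> \<longleftrightarrow> d dvd F z"
    using d odd_coef[OF x] by (rule dvd_n_mult_odd_iff)
  finally show ?thesis unfolding z_def .
qed

lemma crossed_hom_eq_iff:
  assumes F: "crossed_hom F" and x: "x \<in> carrier Hol" and y: "y \<in> carrier Hol"
  shows "F x = F y \<longleftrightarrow> F (inv\<^bsub>Hol\<^esub> x \<otimes>\<^bsub>Hol\<^esub> y) = 0"
proof -
  have range: "0 \<le> F h \<and> F h < n" if "h \<in> carrier Hol" for h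
    using F that unfolding crossed_hom_def by blast
  have "F x = F y \<longleftrightarrow> n dvd F y - F x"
    using range[OF x] range[OF y] by (simp add: dvd_n_diff_iff)
  also have "\<dots> \<longleftrightarrow> n dvd F (inv\<^bsub>Hol\<^esub> x \<otimes>\<^bsub>Hol\<^esub> y)"
    using crossed_hom_dvd_diff_iff[OF F dvd_refl x y] .
  also have "\<dots> \<longleftrightarrow> F (inv\<^bsub>Hol\<^esub> x \<otimes>\<^bsub>Hol\<^esub> y) = 0"
    using range[of "inv\<^bsub>Hol\<^esub> x \<otimes>\<^bsub>Hol\<^esub> y"] x y by (simp add: dvd_n_iff_eq_0)
  finally show ?thesis .
qed

lemma crossed_hom_one: "crossed_hom F \<Longrightarrow> F \<one>\<^bsub>Hol\<^esub> = 0"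
  using crossed_hom_eq_iff[of F "\<one>\<^bsub>Hol\<^esub>" "\<one>\<^bsub>Hol\<^esub>"] by simp

lemma crossed_hom_dvd_subgroup:
  assumes F: "crossed_hom F" and H: "subgroup H Hol" and d: "d dvd n"
  shows "subgroup {h \<in> H. d dvd F h} Hol"
proof -
  have H_carrier: "h \<in> carrier Hol" if "h \<in> H" for h
    using subgroup.mem_carrier[OF H that] .
  have inv: "d dvd F (inv\<^bsub>Hol\<^esub> h)" if "h \<in> H" "d dvd F h" for h
    using crossed_hom_dvd_diff_iff[OF F d H_carrier[OF that(1)] hol.one_closed] that
    by (simp add: crossed_hom_one[OF F] H_carrier)
  show ?thesis
  proof (rule hol.subgroupI)
    show "{h \<in> H. d dvd F h} \<subseteq> carrier Hol" using H_carrier by blast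
    have "\<one>\<^bsub>Hol\<^esub> \<in> {h \<in> H. d dvd F h}"
      using subgroup.one_closed[OF H] by (simp add: crossed_hom_one[OF F])
    then show "{h \<in> H. d dvd F h} \<noteq> {}" by blast
  next
    fix h assume "h \<in> {h \<in> H. d dvd F h}"
    then show "inv\<^bsub>Hol\<^esub> h \<in> {h \<in> H. d dvd F h}"
      using inv subgroup.m_inv_closed[OF H] by blast
  next
    fix h k assume h: "h \<in> {h \<in> H. d dvd F h}" and k: "k \<in> {h \<in> H. d dvd F h}"
    then have "d dvd F k - F (inv\<^bsub>Hol\<^esub> h)" using inv by simp
    then have "d dvd F (h \<otimes>\<^bsub>Hol\<^esub> k)"
      using crossed_hom_dvd_diff_iff[OF F d, of "inv\<^bsub>Hol\<^esub> h" k] h k H_carrier by simp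
    then show "h \<otimes>\<^bsub>Hol\<^esub> k \<in> {h \<in> H. d dvd F h}"
      using h k subgroup.m_closed[OF H] by blast
  qed
qed

lemma cocycle_eq_0_iff:
  assumes "h \<in> carrier Hol"
  shows "cocycle \<kappa> h = 0 \<longleftrightarrow> coef h = (1 + \<kappa> * transl h) mod n"
proof -
  have "cocycle \<kappa> h = 0 \<longleftrightarrow> n dvd (1 + \<kappa> * transl h) - coef h"
    unfolding cocycle_def by (simp add: dvd_eq_mod_eq_0 algebra_simps)
  also have "\<dots> \<longleftrightarrow> (1 + \<kappa> * transl h) mod n = coef h mod n"
    by (simp add: mod_eq_dvd_iff)
  also have "\<dots> \<longleftrightarrow> coef h = (1 + \<kappa> * transl h) mod n"
    using coef_range[OF assms] by auto
  finally show ?thesis .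
qed

lemma inj_on_transl_cocycle_kernel: "inj_on transl {h \<in> carrier Hol. cocycle \<kappa> h = 0}"
  by (intro inj_onI hol_eqI) (auto simp: cocycle_eq_0_iff)

lemma translations_subgroup: "subgroup {h \<in> carrier Hol. coef h = 1} Hol"
proof (rule hol.subgroupI)
  show "{h \<in> carrier Hol. coef h = 1} \<subseteq> carrier Hol" by blast
  have "\<one>\<^bsub>Hol\<^esub> \<in> {h \<in> carrier Hol. coef h = 1}" by simp
  then show "{h \<in> carrier Hol. coef h = 1} \<noteq> {}" by blast
next
  fix h assume h: "h \<in> {h \<in> carrier Hol. coef h = 1}"
  then have "coef (inv\<^bsub>Hol\<^esub> h) mod n = 1"
    using coef_mult[of h "inv\<^bsub>Hol\<^esub> h"] by simp
  then have "coef (inv\<^bsub>Hol\<^esub> h) = 1"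
    using h coef_range[of "inv\<^bsub>Hol\<^esub> h"] by simp
  then show "inv\<^bsub>Hol\<^esub> h \<in> {h \<in> carrier Hol. coef h = 1}" using h by simp
next
  fix h k assume "h \<in> {h \<in> carrier Hol. coef h = 1}" "k \<in> {h \<in> carrier Hol. coef h = 1}"
  then show "h \<otimes>\<^bsub>Hol\<^esub> k \<in> {h \<in> carrier Hol. coef h = 1}"
    using exponent_pos by (simp add: coef_mult)
qed

lemma inj_on_transl_translations: "inj_on transl {h \<in> carrier Hol. coef h = 1}"
  by (intro inj_onI hol_eqI) auto

lemma commutator_coords:
  assumes x: "x \<in> carrier Hol" and y: "y \<in> carrier Hol"
  defines "u \<equiv> x \<otimes>\<^bsub>Hol\<^esub> y \<otimes>\<^bsub>Hol\<^esub> inv\<^bsub>Hol\<^esub> x \<otimes>\<^bsub>Hol\<^esub> inv\<^bsub>Hol\<^esub> y"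
  shows "coef u = 1"
    and "transl u = (transl x * cocycle \<kappa> y - transl y * cocycle \<kappa> x) mod n"
proof -
  have u: "u \<in> carrier Hol" using x y by (simp add: u_def)
  have yx: "y \<otimes>\<^bsub>Hol\<^esub> x \<in> carrier Hol" using x y by simp
  have u_yx: "u \<otimes>\<^bsub>Hol\<^esub> (y \<otimes>\<^bsub>Hol\<^esub> x) = x \<otimes>\<^bsub>Hol\<^esub> y"
    using x y by (simp add: u_def hol.m_assoc hol.inv_solve_left')
  have "(coef u * coef (y \<otimes>\<^bsub>Hol\<^esub> x)) mod n = coef (y \<otimes>\<^bsub>Hol\<^esub> x)"
    using arg_cong[OF u_yx, of coef] x y u yx by (simp add: coef_mult mult.commute)
  also have "\<dots> = coef (y \<otimes>\<^bsub>Hol\<^esub> x) mod n"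
    using coef_range[OF yx] by simp
  finally have "n dvd coef (y \<otimes>\<^bsub>Hol\<^esub> x) * (coef u - 1)"
    by (simp add: mod_eq_dvd_iff algebra_simps)
  then have "n dvd coef u - 1"
    using dvd_n_mult_odd_iff[OF dvd_refl odd_coef[OF yx]] by simp
  then show coef_u: "coef u = 1"
    using coef_range[OF u] n_gt_1 by (simp add: dvd_n_diff_iff)
  have "(transl u + transl (y \<otimes>\<^bsub>Hol\<^esub> x)) mod n = transl (x \<otimes>\<^bsub>Hol\<^esub> y)"
    using arg_cong[OF u_yx, of transl] u yx by (simp add: transl_mult coef_u)
  then have "transl u mod n = (transl (x \<otimes>\<^bsub>Hol\<^esub> y) - transl (y \<otimes>\<^bsub>Hol\<^esub> x)) mod n"
    by (metis add_diff_cancel_right' mod_diff_left_eq)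
  also have "\<dots> = ((transl x + coef x * transl y) - (transl y + coef y * transl x)) mod n"
    unfolding transl_mult[OF x y] transl_mult[OF y x] by (intro mod_diff_cong) simp_all
  also have "\<dots> = (transl x * (1 - coef y + \<kappa> * transl y) - transl y * (1 - coef x + \<kappa> * transl x)) mod n"
    by (simp add: algebra_simps)
  also have "\<dots> = (transl x * cocycle \<kappa> y - transl y * cocycle \<kappa> x) mod n"
    unfolding cocycle_def by (intro mod_diff_cong mod_mult_cong) simp_all
  finally show "transl u = (transl x * cocycle \<kappa> y - transl y * cocycle \<kappa> x) mod n"
    using transl_range[OF u] by simp
qed

lemma commute_iff:
  assumes x: "x \<in> carrier Hol" and y: "y \<in> carrier Hol"
  shows "x \<otimes>\<^bsub>Hol\<^esub> y = y \<otimes>\<^bsub>Hol\<^esub> x \<longleftrightarrow> n dvd transl x * cocycle \<kappa> y - transl y * cocycle \<kappa> x"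
proof -
  define u where "u = x \<otimes>\<^bsub>Hol\<^esub> y \<otimes>\<^bsub>Hol\<^esub> inv\<^bsub>Hol\<^esub> x \<otimes>\<^bsub>Hol\<^esub> inv\<^bsub>Hol\<^esub> y"
  have u: "u \<in> carrier Hol" using x y by (simp add: u_def)
  have "x \<otimes>\<^bsub>Hol\<^esub> y = y \<otimes>\<^bsub>Hol\<^esub> x \<longleftrightarrow> u = \<one>\<^bsub>Hol\<^esub>"
    unfolding u_def using x y by (rule hol.commutator_eq_one_iff[symmetric])
  also have "\<dots> \<longleftrightarrow> transl u = 0"
    using hol_eqI[OF u hol.one_closed] commutator_coords(1)[OF x y, folded u_def] by auto
  also have "\<dots> \<longleftrightarrow> n dvd transl x * cocycle \<kappa> y - transl y * cocycle \<kappa> x"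
    using commutator_coords(2)[OF x y, of \<kappa>] by (simp add: u_def dvd_eq_mod_eq_0)
  finally show ?thesis .
qed

definition multiples :: "nat \<Rightarrow> int set" where
  "multiples j = {x. 0 \<le> x \<and> x < n \<and> 2 ^ j dvd x}"

lemma card_multiples: "j \<le> e \<Longrightarrow> card (multiples j) = 2 ^ (e - j)"
  by (simp add: multiples_def card_pow2_multiples)

lemma finite_multiples: "finite (multiples j)"
  unfolding multiples_def by (rule finite_subset[of _ "{0..<n}"]) auto

lemma multiples_antimono: "i \<le> j \<Longrightarrow> multiples j \<subseteq> multiples i"
  unfolding multiples_def using le_imp_power_dvd dvd_trans by blast

lemma pow2_dvd_of_transl_pow_eq:
  assumes h: "h \<in> carrier Hol" and coef_h: "coef h mod 4 = 1"
    and b: "transl h = 2 ^ v * u" and "odd u" and "v \<le> e"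
    and "k \<le> k'" and eq: "transl (h [^]\<^bsub>Hol\<^esub> k) = transl (h [^]\<^bsub>Hol\<^esub> k')"
  shows "2 ^ (e - v) dvd int (k' - k)"
proof -
  define \<mu> where "\<mu> = coef h"
  define d where "d = k' - k"
  have n_split: "n = 2 ^ v * 2 ^ (e - v)"
    using \<open>v \<le> e\<close> by (simp flip: power_add)
  have sum_k': "(\<Sum>i<k'. \<mu> ^ i) = (\<Sum>i<k. \<mu> ^ i) + \<mu> ^ k * (\<Sum>i<d. \<mu> ^ i)"
    using sum_powers_lessThan_add[of \<mu> k d] \<open>k \<le> k'\<close> by (simp add: d_def)
  have "n dvd transl h * (\<Sum>i<k'. \<mu> ^ i) - transl h * (\<Sum>i<k. \<mu> ^ i)"
    using eq by (simp add: transl_pow[OF h] \<mu>_def mod_eq_dvd_iff dvd_diff_commute)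
  then have "2 ^ v * 2 ^ (e - v) dvd 2 ^ v * ((u * \<mu> ^ k) * (\<Sum>i<d. \<mu> ^ i))"
    by (simp add: n_split sum_k' b algebra_simps)
  then have "2 ^ (e - v) dvd (u * \<mu> ^ k) * (\<Sum>i<d. \<mu> ^ i)"
    by simp
  moreover have "odd (u * \<mu> ^ k)"
    using \<open>odd u\<close> odd_coef[OF h] by (simp add: \<mu>_def)
  moreover have "(2::int) ^ (e - v) dvd n" by (simp add: n_split)
  ultimately have "2 ^ (e - v) dvd (\<Sum>i<d. \<mu> ^ i)"
    using dvd_n_mult_odd_iff by blast
  then show ?thesis
    using pow2_dvd_sum_powers_iff coef_h by (simp add: \<mu>_def d_def)
qed

lemma multiples_subset_transl_powers:
  assumes h: "h \<in> carrier Hol" and coef_h: "coef h mod 4 = 1"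
    and b: "transl h = 2 ^ v * u" and "odd u"
  shows "multiples v \<subseteq> range (\<lambda>k::nat. transl (h [^]\<^bsub>Hol\<^esub> k))"
proof -
  define f where "f k = transl (h [^]\<^bsub>Hol\<^esub> k)" for k :: nat
  have "transl h \<noteq> 0" using b \<open>odd u\<close> by auto
  then have "(2::int) ^ v < 2 ^ e"
    using zdvd_imp_le[of "2 ^ v" "transl h"] transl_range[OF h] b by fastforce
  then have "v < e" by simp
  have "f ` {0..<2 ^ (e - v)} \<subseteq> multiples v"
  proof
    fix x assume "x \<in> f ` {0..<2 ^ (e - v)}"
    then obtain k where x: "x = f k" by blast
    have "2 ^ v dvd transl h * (\<Sum>i<k. coef h ^ i)" using b by simp
    then have "2 ^ v dvd x"
      using pow2_dvd_n[of v] \<open>v < e\<close> by (simp add: x f_def transl_pow[OF h] dvd_mod_iff)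
    then show "x \<in> multiples v"
      using transl_range[of "h [^]\<^bsub>Hol\<^esub> k"] h by (simp add: multiples_def x f_def)
  qed
  moreover have "inj_on f {0..<2 ^ (e - v)}"
  proof (rule linorder_inj_onI')
    fix k k' :: nat assume "k' \<in> {0..<2 ^ (e - v)}" "k < k'"
    have "int k' < 2 ^ (e - v)"
      using \<open>k' \<in> _\<close> of_nat_less_iff[of k' "2 ^ (e - v)", where 'a = int] by simp
    then have "0 < int (k' - k)" "int (k' - k) < 2 ^ (e - v)"
      using \<open>k < k'\<close> by linarith+
    then have "\<not> 2 ^ (e - v) dvd int (k' - k)"
      by (rule zdvd_not_zless)
    then show "f k \<noteq> f k'"
      using pow2_dvd_of_transl_pow_eq[OF h coef_h b \<open>odd u\<close>] \<open>v < e\<close> \<open>k < k'\<close>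
      by (auto simp: f_def)
  qed
  ultimately have "f ` {0..<2 ^ (e - v)} = multiples v"
    using \<open>v < e\<close> by (intro card_subset_eq finite_multiples) (simp_all add: card_image card_multiples)
  then show ?thesis unfolding f_def by auto
qed
end

section \<open>Non-regular transitive subgroups\<close>

locale transitive_nonregular = cyclic_pow2_group +
  fixes G :: "('a \<times> ('a \<Rightarrow> 'a)) set"
  assumes G_subgroup: "subgroup G Hol"
    and G_transitive: "hol_transitive N G"
    and G_not_regular: "\<not> hol_regular N G"
    and exponent_ge_2: "2 \<le> e"
begin

lemma G_subset: "G \<subseteq> carrier Hol"
  using subgroup.subset[OF G_subgroup] .

lemma G_carrier: "h \<in> G \<Longrightarrow> h \<in> carrier Hol"
  using G_subset by blast

lemma inv_mult_in_G: "x \<in> G \<Longrightarrow> y \<in> G \<Longrightarrow> inv\<^bsub>Hol\<^esub> x \<otimes>\<^bsub>Hol\<^esub> y \<in> G"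
  by (simp add: G_subgroup subgroup.m_closed subgroup.m_inv_closed)

lemma transl_image: "transl ` G = {0..<n}"
proof
  show "transl ` G \<subseteq> {0..<n}" using transl_range G_carrier by auto
  show "{0..<n} \<subseteq> transl ` G"
  proof
    fix b assume b: "b \<in> {0..<n}"
    obtain h where h: "h \<in> G" "hol_act N h \<one> = g [^] b"
      using G_transitive generator_closed unfolding hol_transitive_def by blast
    then have "transl h = b"
      using b hol_act_one[OF G_carrier] pow_eq_iff transl_range[OF G_carrier] by simp
    then show "b \<in> transl ` G" using h(1) by blast
  qed
qed

lemma nontrivial_stabiliser: obtains \<delta> where "\<delta> \<in> G" "transl \<delta> = 0" "\<delta> \<noteq> \<one>\<^bsub>Hol\<^esub>"
proof -
  have "{h \<in> G. hol_act N h \<one> = \<one>} \<noteq> {\<one>\<^bsub>Hol\<^esub>}"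
    using G_transitive G_not_regular unfolding hol_regular_def by blast
  moreover have "\<one>\<^bsub>Hol\<^esub> \<in> {h \<in> G. hol_act N h \<one> = \<one>}"
    using subgroup.one_closed[OF G_subgroup] by (simp add: hol_act_one)
  ultimately obtain \<delta> where "\<delta> \<in> G" "hol_act N \<delta> \<one> = \<one>" "\<delta> \<noteq> \<one>\<^bsub>Hol\<^esub>" by blast
  moreover from this have "transl \<delta> = 0"
    using hol_act_one[OF G_carrier] pow_eq_iff[of _ 0] transl_range[OF G_carrier] by simp
  ultimately show thesis using that by blast
qed

lemma finite_G: "finite G"
  using finite_subset[OF G_subset finite_carrier_hol] .

lemma card_G_ge: "2 * 2 ^ e \<le> card G"
proof -
  obtain \<delta> where \<delta>: "\<delta> \<in> G" "transl \<delta> = 0" "\<delta> \<noteq> \<one>\<^bsub>Hol\<^esub>"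
    by (rule nontrivial_stabiliser)
  define S where "S = {h \<in> G. transl h = 0}"
  have "{\<one>\<^bsub>Hol\<^esub>, \<delta>} \<subseteq> S"
    using \<delta> subgroup.one_closed[OF G_subgroup] by (auto simp: S_def)
  then have "card {\<one>\<^bsub>Hol\<^esub>, \<delta>} \<le> card S"
    using finite_subset[OF _ finite_G, of S] by (intro card_mono) (auto simp: S_def)
  then have "2 \<le> card S"
    using \<delta>(3) by simp
  have "card G = card S * card (transl ` G)"
  proof (rule hol.card_eq_card_kernel_mult_card_image[OF G_subgroup finite_G])
    show "\<And>x y. x \<in> G \<Longrightarrow> y \<in> G \<Longrightarrow> transl x = transl y \<longleftrightarrow> inv\<^bsub>Hol\<^esub> x \<otimes>\<^bsub>Hol\<^esub> y \<in> S"
      using crossed_hom_eq_iff[OF crossed_hom_transl] G_carrier inv_mult_in_G by (auto simp: S_def)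
  qed (auto simp: S_def)
  also have "card (transl ` G) = 2 ^ e"
    by (simp add: transl_image nat_power_eq)
  finally show ?thesis using \<open>2 \<le> card S\<close> by simp
qed

definition g1 where "g1 = (SOME h. h \<in> G \<and> transl h = 1)"

lemma g1: "g1 \<in> G" "transl g1 = 1"
proof -
  have "\<exists>h. h \<in> G \<and> transl h = 1"
    using transl_image n_gt_1 by (metis atLeastLessThan_iff image_iff zero_le_one)
  then show "g1 \<in> G" "transl g1 = 1"
    unfolding g1_def by (metis (mono_tags, lifting) someI_ex)+
qed

definition kappa :: int where
  "kappa = coef g1 - 1"

abbreviation E where "E \<equiv> cocycle kappa"

lemma E_g1: "E g1 = 0"
  using g1 by (simp add: cocycle_def kappa_def)

lemma even_kappa: "even kappa"
  using odd_coef[OF G_carrier[OF g1(1)]] by (simp add: kappa_def)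

lemma E_range: "h \<in> carrier Hol \<Longrightarrow> 0 \<le> E h \<and> E h < n"
  using crossed_hom_cocycle unfolding crossed_hom_def by blast

lemma commutes_with_g1_iff:
  assumes "h \<in> carrier Hol"
  shows "h \<otimes>\<^bsub>Hol\<^esub> g1 = g1 \<otimes>\<^bsub>Hol\<^esub> h \<longleftrightarrow> E h = 0"
  using commute_iff[OF assms G_carrier[OF g1(1)], of kappa] E_range[OF assms]
  by (simp add: E_g1 g1 dvd_n_iff_eq_0)

lemma exists_E_not_dvd_n: "\<exists>h\<in>G. \<not> 2 ^ e dvd E h"
proof -
  obtain \<delta> where \<delta>: "\<delta> \<in> G" "transl \<delta> = 0" "\<delta> \<noteq> \<one>\<^bsub>Hol\<^esub>"
    by (rule nontrivial_stabiliser)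
  have "coef \<delta> \<noteq> 1"
    using \<delta> hol_eqI[of \<delta> "\<one>\<^bsub>Hol\<^esub>"] G_carrier by auto
  then have "\<not> n dvd 1 - coef \<delta>"
    using coef_range[OF G_carrier[OF \<delta>(1)]] n_gt_1 dvd_n_diff_iff[of "coef \<delta>" 1] by simp
  then have "\<not> n dvd E \<delta>"
    using \<delta>(2) by (simp add: cocycle_def dvd_mod_iff)
  then show ?thesis using \<delta>(1) by blast
qed

(* 2 ^ eps is the largest power of 2 dividing all values of E on G. *)
definition eps :: nat where
  "eps = (LEAST k. \<exists>h\<in>G. \<not> 2 ^ Suc k dvd E h)"

lemma pow2_eps_dvd_E:
  assumes "h \<in> G"
  shows "2 ^ eps dvd E h"
proof (cases eps)
  case (Suc k)
  then have "k < eps" by simp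
  then have "\<not> (\<exists>h\<in>G. \<not> (2::int) ^ Suc k dvd E h)"
    unfolding eps_def by (rule not_less_Least)
  then show ?thesis using Suc assms by auto
qed simp

lemma E_witness: obtains t u where "t \<in> G" "E t = 2 ^ eps * u" "odd u"
proof -
  have "Suc (e - 1) = e" using exponent_pos by simp
  then have "\<exists>t\<in>G. \<not> 2 ^ Suc (e - 1) dvd E t" using exists_E_not_dvd_n by simp
  then have "\<exists>t\<in>G. \<not> 2 ^ Suc eps dvd E t"
    unfolding eps_def by (rule LeastI)
  then obtain t where t: "t \<in> G" "\<not> 2 ^ Suc eps dvd E t" by blast
  obtain u where "E t = 2 ^ eps * u" using pow2_eps_dvd_E[OF t(1)] by blast
  moreover from this have "odd u" using t(2) by auto
  ultimately show thesis using that t(1) by blast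
qed

lemma eps_less: "eps < e"
proof (rule ccontr)
  assume "\<not> eps < e"
  then have "(2::int) ^ e dvd 2 ^ eps" by (simp add: le_imp_power_dvd)
  then show False using exists_E_not_dvd_n pow2_eps_dvd_E dvd_trans by blast
qed

subsection \<open>The derived subgroup\<close>

lemma derived_subset:
  "derived Hol G \<subseteq> {h \<in> {h \<in> carrier Hol. coef h = 1}. 2 ^ eps dvd transl h}"
  unfolding derived_def
proof (rule hol.generate_subgroup_incl)
  show "subgroup {h \<in> {h \<in> carrier Hol. coef h = 1}. 2 ^ eps dvd transl h} Hol"
    using eps_less
    by (intro crossed_hom_dvd_subgroup crossed_hom_transl translations_subgroup pow2_dvd_n) simp
  show "derived_set Hol G \<subseteq> {h \<in> {h \<in> carrier Hol. coef h = 1}. 2 ^ eps dvd transl h}"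
  proof
    fix c assume "c \<in> derived_set Hol G"
    then obtain x y where x: "x \<in> G" and y: "y \<in> G"
      and c: "c = x \<otimes>\<^bsub>Hol\<^esub> y \<otimes>\<^bsub>Hol\<^esub> inv\<^bsub>Hol\<^esub> x \<otimes>\<^bsub>Hol\<^esub> inv\<^bsub>Hol\<^esub> y"
      by blast
    have "2 ^ eps dvd transl x * E y - transl y * E x"
      using pow2_eps_dvd_E[OF x] pow2_eps_dvd_E[OF y] by simp
    then have "2 ^ eps dvd transl c"
      using commutator_coords(2)[OF G_carrier[OF x] G_carrier[OF y], of kappa] pow2_dvd_n eps_less
      by (simp add: c dvd_mod)
    then show "c \<in> {h \<in> {h \<in> carrier Hol. coef h = 1}. 2 ^ eps dvd transl h}"
      using commutator_coords(1) G_carrier x y by (simp add: c)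
  qed
qed

lemma multiples_subset_transl_derived: "multiples eps \<subseteq> transl ` derived Hol G"
proof -
  obtain t u where t: "t \<in> G" "E t = 2 ^ eps * u" "odd u" by (rule E_witness)
  define c where "c = g1 \<otimes>\<^bsub>Hol\<^esub> t \<otimes>\<^bsub>Hol\<^esub> inv\<^bsub>Hol\<^esub> g1 \<otimes>\<^bsub>Hol\<^esub> inv\<^bsub>Hol\<^esub> t"
  have g1_t: "g1 \<in> carrier Hol" "t \<in> carrier Hol" using g1 t G_carrier by auto
  have c_derived: "c \<in> derived Hol G"
    unfolding derived_def c_def using g1(1) t(1) by (blast intro: generate.incl)
  have "transl c = E t"
    using commutator_coords(2)[OF g1_t, of kappa] E_range[OF g1_t(2)] by (simp add: c_def g1 E_g1)
  then have "multiples eps \<subseteq> range (\<lambda>k::nat. transl (c [^]\<^bsub>Hol\<^esub> k))"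
    using commutator_coords(1)[OF g1_t] t g1_t
    by (intro multiples_subset_transl_powers) (auto simp: c_def)
  moreover have "c [^]\<^bsub>Hol\<^esub> k \<in> derived Hol G" for k :: nat
    using hol.subgroup_int_pow_closed[OF hol.derived_is_subgroup[OF G_subset] c_derived, of "int k"]
    by (simp add: int_pow_int)
  ultimately show ?thesis by blast
qed

lemma card_derived: "card (derived Hol G) = 2 ^ (e - eps)"
proof -
  have inj: "inj_on transl (derived Hol G)"
    by (rule inj_on_subset[OF inj_on_transl_translations]) (use derived_subset in blast)
  have "transl ` derived Hol G = multiples eps"
    using multiples_subset_transl_derived derived_subset transl_range
    by (fastforce simp: multiples_def)
  then have "card (derived Hol G) = card (multiples eps)"
    using card_image[OF inj] by simp
  then show ?thesis
    using card_multiples eps_less by simp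
qed

subsection \<open>The centre\<close>

(* The centraliser of g1 in G, by commutes_with_g1_iff. *)
definition E_kernel where
  "E_kernel = {h \<in> G. E h = 0}"

lemma E_kernel_carrier: "h \<in> E_kernel \<Longrightarrow> h \<in> carrier Hol"
  by (simp add: E_kernel_def G_carrier)

lemma E_kernel_subgroup: "subgroup E_kernel Hol"
proof -
  have "E h = 0 \<longleftrightarrow> n dvd E h" if "h \<in> G" for h
    using E_range[OF G_carrier[OF that]] by (simp add: dvd_n_iff_eq_0)
  then have "E_kernel = {h \<in> G. n dvd E h}"
    unfolding E_kernel_def by blast
  then show ?thesis
    using crossed_hom_dvd_subgroup[OF crossed_hom_cocycle G_subgroup dvd_refl] by simp
qed

lemma center_eq:
  "group_center (Hol\<lparr>carrier := G\<rparr>) = {z \<in> E_kernel. 2 ^ (e - eps) dvd transl z}"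
proof -
  obtain t u where t: "t \<in> G" "E t = 2 ^ eps * u" "odd u" by (rule E_witness)
  have n_split: "n = 2 ^ (e - eps) * 2 ^ eps"
    using eps_less by (simp flip: power_add)
  have "(\<forall>h\<in>G. z \<otimes>\<^bsub>Hol\<^esub> h = h \<otimes>\<^bsub>Hol\<^esub> z) \<longleftrightarrow> E z = 0 \<and> 2 ^ (e - eps) dvd transl z"
    if z: "z \<in> G" for z
  proof
    assume central: "\<forall>h\<in>G. z \<otimes>\<^bsub>Hol\<^esub> h = h \<otimes>\<^bsub>Hol\<^esub> z"
    then have Ez: "E z = 0"
      using commutes_with_g1_iff G_carrier g1(1) z by blast
    then have "n dvd transl z * E t"
      using central t(1) commute_iff[of z t kappa] G_carrier z by auto
    then have "2 ^ (e - eps) dvd u * transl z"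
      using n_split t(2) by (simp add: algebra_simps)
    then have "2 ^ (e - eps) dvd transl z"
      using dvd_n_mult_odd_iff[OF pow2_dvd_n t(3)] by simp
    then show "E z = 0 \<and> 2 ^ (e - eps) dvd transl z" using Ez by blast
  next
    assume z_coords: "E z = 0 \<and> 2 ^ (e - eps) dvd transl z"
    show "\<forall>h\<in>G. z \<otimes>\<^bsub>Hol\<^esub> h = h \<otimes>\<^bsub>Hol\<^esub> z"
    proof
      fix h assume h: "h \<in> G"
      have "n dvd transl z * E h"
        unfolding n_split using z_coords pow2_eps_dvd_E[OF h] by (simp add: mult_dvd_mono)
      then show "z \<otimes>\<^bsub>Hol\<^esub> h = h \<otimes>\<^bsub>Hol\<^esub> z"
        using commute_iff[of z h kappa] G_carrier h z z_coords by simp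
    qed
  qed
  then show ?thesis unfolding group_center_def E_kernel_def by auto
qed

lemma card_G_eq: "card G = card E_kernel * card (E ` G)"
proof (rule hol.card_eq_card_kernel_mult_card_image[OF G_subgroup finite_G])
  show "E_kernel \<subseteq> G" by (auto simp: E_kernel_def)
  show "E x = E y \<longleftrightarrow> inv\<^bsub>Hol\<^esub> x \<otimes>\<^bsub>Hol\<^esub> y \<in> E_kernel" if "x \<in> G" "y \<in> G" for x y
    using that crossed_hom_eq_iff[OF crossed_hom_cocycle] G_carrier inv_mult_in_G
    by (auto simp: E_kernel_def)
qed

lemma card_E_kernel_eq:
  "card E_kernel = card {h \<in> E_kernel. even (transl h)} * card ((\<lambda>h. transl h mod 2) ` E_kernel)"
proof (rule hol.card_eq_card_kernel_mult_card_image[OF E_kernel_subgroup])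
  show "finite E_kernel"
    using finite_subset[OF _ finite_G] by (auto simp: E_kernel_def)
  show "transl x mod 2 = transl y mod 2 \<longleftrightarrow>
      inv\<^bsub>Hol\<^esub> x \<otimes>\<^bsub>Hol\<^esub> y \<in> {h \<in> E_kernel. even (transl h)}"
    if "x \<in> E_kernel" "y \<in> E_kernel" for x y
    using that crossed_hom_dvd_diff_iff[OF crossed_hom_transl _ E_kernel_carrier E_kernel_carrier,
        of 2 x y] even_n subgroup.m_closed[OF E_kernel_subgroup]
      subgroup.m_inv_closed[OF E_kernel_subgroup]
    by (auto simp: mod_eq_dvd_iff dvd_diff_commute)
qed blast

lemma card_even_E_kernel: "2 ^ eps \<le> card {h \<in> E_kernel. even (transl h)}"
proof -
  have "card (E ` G) \<le> card (multiples eps)"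
    using pow2_eps_dvd_E E_range G_carrier
    by (intro card_mono[OF finite_multiples]) (auto simp: multiples_def)
  then have "card (E ` G) \<le> 2 ^ (e - eps)"
    using card_multiples eps_less by simp
  moreover have "card ((\<lambda>h. transl h mod 2) ` E_kernel) \<le> 2"
    using card_mono[of "{0, 1}" "(\<lambda>h. transl h mod 2) ` E_kernel"] by fastforce
  ultimately have "card G \<le> card {h \<in> E_kernel. even (transl h)} * 2 * 2 ^ (e - eps)"
    unfolding card_G_eq card_E_kernel_eq by (intro mult_le_mono) simp_all
  moreover have "2 * (2 ^ eps * 2 ^ (e - eps)) \<le> card G"
    using card_G_ge eps_less by (simp flip: power_add)
  ultimately have
    "2 * (2 ^ eps * 2 ^ (e - eps)) \<le> card {h \<in> E_kernel. even (transl h)} * 2 * 2 ^ (e - eps)"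
    by (rule order_trans[rotated])
  then show ?thesis by simp
qed

lemma coef_mod_4:
  assumes "h \<in> E_kernel" "even (transl h)"
  shows "coef h mod 4 = 1"
proof -
  obtain a b where "kappa = 2 * a" "transl h = 2 * b"
    using even_kappa assms(2) by (auto elim!: evenE)
  then have k: "kappa * transl h = 4 * (a * b)" by simp
  have "coef h = (1 + kappa * transl h) mod n"
    using assms(1) cocycle_eq_0_iff[OF E_kernel_carrier[OF assms(1)]] by (simp add: E_kernel_def)
  moreover have "(4::int) dvd n"
    using pow2_dvd_n[of 2] exponent_ge_2 by simp
  ultimately have "coef h mod 4 = (1 + kappa * transl h) mod 4"
    by (simp add: mod_mod_cancel)
  also have "\<dots> = 1" by (simp add: k)
  finally show ?thesis .
qed

lemma exists_even_E_kernel_not_dvd: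
  assumes "0 < eps"
  obtains h where "h \<in> E_kernel" "even (transl h)" "\<not> 2 ^ (e - eps + 1) dvd transl h"
proof -
  let ?K = "{h \<in> E_kernel. even (transl h)}"
  have "\<exists>h\<in>?K. \<not> 2 ^ (e - eps + 1) dvd transl h"
  proof (rule ccontr)
    assume "\<not> ?thesis"
    then have "transl ` ?K \<subseteq> multiples (e - eps + 1)"
      using transl_range E_kernel_carrier by (auto simp: multiples_def)
    moreover have "inj_on transl ?K"
      by (rule inj_on_subset[OF inj_on_transl_cocycle_kernel]) (auto simp: E_kernel_def G_carrier)
    ultimately have "card ?K \<le> card (multiples (e - eps + 1))"
      by (intro card_inj_on_le[OF _ _ finite_multiples])
    also have "\<dots> = 2 ^ (eps - 1)"
      using card_multiples[of "e - eps + 1"] assms eps_less by simp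
    also have "\<dots> < 2 ^ eps"
      using assms by simp
    finally show False using card_even_E_kernel by simp
  qed
  then show thesis using that by blast
qed

lemma multiples_subset_transl_E_kernel: "multiples (e - eps) \<subseteq> transl ` E_kernel"
proof (cases "eps = 0")
  case True
  have "multiples (e - eps) = {0}"
    using True n_gt_1 by (auto simp: multiples_def dvd_n_iff_eq_0)
  moreover have "transl \<one>\<^bsub>Hol\<^esub> \<in> transl ` E_kernel"
    using subgroup.one_closed[OF E_kernel_subgroup] by (rule imageI)
  ultimately show ?thesis by simp
next
  case False
  then obtain h where h: "h \<in> E_kernel" "even (transl h)" "\<not> 2 ^ (e - eps + 1) dvd transl h"
    using exists_even_E_kernel_not_dvd by blast
  define v where "v = multiplicity 2 (transl h)"
  have "transl h \<noteq> 0" using h(3) by auto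
  moreover have "\<not> is_unit (2::int)" by simp
  ultimately obtain u where vu: "transl h = 2 ^ v * u" "odd u"
    unfolding v_def using multiplicity_decompose' by blast
  have "v \<le> e - eps"
  proof (rule ccontr)
    assume "\<not> v \<le> e - eps"
    then have "(2::int) ^ (e - eps + 1) dvd 2 ^ v" by (intro le_imp_power_dvd) simp
    then show False using h(3) vu(1) by (auto dest: dvd_mult_right)
  qed
  have "multiples v \<subseteq> range (\<lambda>k::nat. transl (h [^]\<^bsub>Hol\<^esub> k))"
    using multiples_subset_transl_powers[OF E_kernel_carrier[OF h(1)] coef_mod_4[OF h(1,2)] vu] .
  moreover have "h [^]\<^bsub>Hol\<^esub> k \<in> E_kernel" for k :: nat
    using hol.subgroup_int_pow_closed[OF E_kernel_subgroup h(1), of "int k"] by (simp add: int_pow_int)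
  ultimately show ?thesis
    using multiples_antimono[OF \<open>v \<le> e - eps\<close>] by blast
qed

lemma card_center: "card (group_center (Hol\<lparr>carrier := G\<rparr>)) = 2 ^ eps"
proof -
  let ?Z = "{z \<in> E_kernel. 2 ^ (e - eps) dvd transl z}"
  have inj: "inj_on transl ?Z"
    by (rule inj_on_subset[OF inj_on_transl_cocycle_kernel]) (auto simp: E_kernel_def G_carrier)
  have "transl ` ?Z = multiples (e - eps)"
  proof
    show "transl ` ?Z \<subseteq> multiples (e - eps)"
      using transl_range E_kernel_carrier by (auto simp: multiples_def)
    show "multiples (e - eps) \<subseteq> transl ` ?Z"
    proof
      fix x assume x: "x \<in> multiples (e - eps)"
      then obtain z where "z \<in> E_kernel" "x = transl z"
        using multiples_subset_transl_E_kernel by blast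
      then show "x \<in> transl ` ?Z" using x by (auto simp: multiples_def)
    qed
  qed
  then have "card ?Z = card (multiples (e - eps))"
    using card_image[OF inj] by simp
  then show ?thesis
    using center_eq card_multiples eps_less by simp
qed

theorem card_center_mult_card_derived:
  "card (group_center (Hol\<lparr>carrier := G\<rparr>)) * card (derived Hol G) = 2 ^ e"
  using card_center card_derived eps_less by (simp flip: power_add)

end

lemma (in group) cyclic_group_generator:
  assumes "cyclic_group G"
  obtains g where "g \<in> carrier G" "carrier G = range (\<lambda>k::int. g [^] k)" "ord g = order G"
proof -
  obtain g where g: "g \<in> carrier G" "carrier G = range (\<lambda>k::int. g [^] k)"
    using assms cyclic_group by blast
  have "ord g = card (generate G {g})" by (rule generate_pow_card[OF g(1)])
  also have "generate G {g} = carrier G" using generate_pow[OF g(1)] g(2) by auto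
  finally show thesis using that g unfolding order_def by blast
qed

theorem lemma5p6:
  fixes N :: "('a, 'b) monoid_scheme" and G :: "('a \<times> ('a \<Rightarrow> 'a)) set" and e :: nat
  assumes "group N" and "cyclic_group N" and "finite (carrier N)"
    and "order N = 2 ^ e" and "e \<ge> 2"
    and "subgroup G (holomorph N)"
    and "hol_transitive N G" and "\<not> hol_regular N G"
  shows "card (group_center ((holomorph N)\<lparr>carrier := G\<rparr>))
           * card (derived (holomorph N) G) = 2 ^ e"
proof -
  interpret N: group N by fact
  obtain g where "g \<in> carrier N" "carrier N = range (\<lambda>k::int. g [^]\<^bsub>N\<^esub> k)" "N.ord g = 2 ^ e"
    using N.cyclic_group_generator assms(2,4) by metis
  then interpret transitive_nonregular N g e G
    using assms
    by (intro transitive_nonregular.intro cyclic_pow2_group.intro cyclic_pow2_group_axioms.intro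
        transitive_nonregular_axioms.intro) simp_all
  show ?thesis by (rule card_center_mult_card_derived)
qed

end
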